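(* Let $s>0$, $0\le r\le 1/4$, and $d:=s(2+s)$. Let $Z$ be a nonnegative random variable satisfying $Z\ge 2rs$ and $\mathbb{E}[Z]\le 2rs+r^2s^2$. Define $F(u):=\min\{1,48u^2\}$ for $u\ge0$. Then \[ \mathbb{E}\left[F\left(\frac{Z}{d}\right)\right]\le 48r^2. \] *)

theory Defs
  imports "HOL-Probability.Probability"
begin

definition Fcap :: "real \<Rightarrow> real" where
  "Fcap u = min 1 (48 * u^2)"

end

theory Submission
  imports Defs
begin

text \<open>Since \<open>Z/d \<ge> u\<^sub>0 := 2rs/d\<close> and \<open>Fcap\<close> is 14-Lipschitz on \<open>[0,\<infinity>)\<close>, the expectation
  \<open>E[Fcap(Z/d)]\<close> is at most \<open>Fcap u\<^sub>0 + 14 (E[Z]/d - u\<^sub>0) \<le> 48 u\<^sub>0\<^sup>2 + 14 r\<^sup>2 s\<^sup>2/d\<close>, and the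
  quadratic inequality \<open>192 + 14 s (2 + s) \<le> 48 (2 + s)\<^sup>2\<close> turns this into \<open>48 r\<^sup>2\<close>.\<close>

lemma Fcap_le_square: "Fcap u \<le> 48 * u\<^sup>2"
  by (simp add: Fcap_def)

lemma Fcap_le_one: "Fcap u \<le> 1"
  by (simp add: Fcap_def)

lemma Fcap_nonneg: "0 \<le> Fcap u"
  by (simp add: Fcap_def)

lemma Fcap_borel_measurable [measurable]: "Fcap \<in> borel_measurable borel"
  unfolding Fcap_def by measurable

lemma Fcap_mono:
  assumes "0 \<le> v" "v \<le> u"
  shows "Fcap v \<le> Fcap u"
proof -
  have "v\<^sup>2 \<le> u\<^sup>2" using assms by (intro power_mono)
  then show ?thesis by (simp add: Fcap_def)
qed

lemma Fcap_diff_le_below_cap: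
  fixes u v :: real
  assumes "0 \<le> v" "v \<le> u" "48 * u\<^sup>2 \<le> 1"
  shows "Fcap u - Fcap v \<le> 14 * (u - v)"
proof -
  have "(96 * u)\<^sup>2 \<le> 14\<^sup>2"
    using assms(3) by (simp add: power_mult_distrib)
  then have slope: "96 * u \<le> 14"
    by (rule power2_le_imp_le) simp
  have "v\<^sup>2 \<le> u\<^sup>2" using assms by (intro power_mono)
  then have "Fcap u - Fcap v = 48 * (u + v) * (u - v)"
    using assms(3) by (simp add: Fcap_def power2_eq_square algebra_simps)
  also have "\<dots> \<le> 96 * u * (u - v)"
    using assms by (intro mult_right_mono) auto
  also have "\<dots> \<le> 14 * (u - v)"
    using slope assms by (intro mult_right_mono) auto
  finally show ?thesis .
qed

lemma Fcap_diff_le: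
  fixes u v :: real
  assumes "0 \<le> v" "v \<le> u"
  shows "Fcap u - Fcap v \<le> 14 * (u - v)"
proof -
  define c where "c = sqrt (1/48)"
  have c: "0 \<le> c" "48 * c\<^sup>2 = 1"
    by (simp_all add: c_def)
  consider "u \<le> c" | "v \<le> c" "c \<le> u" | "c \<le> v"
    by linarith
  then show ?thesis
  proof cases
    case 1
    then have "48 * u\<^sup>2 \<le> 48 * c\<^sup>2"
      using assms by (simp add: power_mono)
    then have "48 * u\<^sup>2 \<le> 1"
      using c by simp
    then show ?thesis
      using assms Fcap_diff_le_below_cap by blast
  next
    case 2
    have "Fcap u = Fcap c"
      using 2 c Fcap_mono[of c u] Fcap_le_one[of u] by (simp add: Fcap_def)
    then show ?thesis
      using Fcap_diff_le_below_cap[OF assms(1) 2(1)] c 2 by simp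
  next
    case 3
    have "Fcap v = 1"
      using 3 c Fcap_mono[of c v] Fcap_le_one[of v] by (simp add: Fcap_def)
    then show ?thesis
      using Fcap_le_one[of u] assms by simp
  qed
qed

lemma (in prob_space) expectation_le_of_one_sided_lipschitz:
  fixes X :: "'a \<Rightarrow> real" and f :: "real \<Rightarrow> real"
  assumes "integrable M X" "integrable M (\<lambda>x. f (X x))"
    and "\<And>x. x \<in> space M \<Longrightarrow> a \<le> X x"
    and "\<And>u. a \<le> u \<Longrightarrow> f u \<le> f a + L * (u - a)"
  shows "expectation (\<lambda>x. f (X x)) \<le> f a + L * (expectation X - a)"
proof -
  have "expectation (\<lambda>x. f (X x)) \<le> expectation (\<lambda>x. f a + L * (X x - a))"
    using assms by (intro integral_mono) auto
  also have "\<dots> = f a + L * (expectation X - a)"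
    using assms(1) by (simp add: prob_space)
  finally show ?thesis .
qed

lemma lipschitz_majorant_at_lower_bound_le:
  fixes r s :: real
  assumes "0 \<le> s"
  shows "48 * (2 * r / (2 + s))\<^sup>2 + 14 * (r\<^sup>2 * s / (2 + s)) \<le> 48 * r\<^sup>2"
proof -
  have "2 + s \<noteq> 0"
    using assms by simp
  then have "48 * (2 * r / (2 + s))\<^sup>2 + 14 * (r\<^sup>2 * s / (2 + s))
      = r\<^sup>2 * (192 + 14 * s * (2 + s)) / (2 + s)\<^sup>2"
    by (simp add: divide_simps) algebra
  also have "\<dots> \<le> r\<^sup>2 * (48 * (2 + s)\<^sup>2) / (2 + s)\<^sup>2"
    using assms by (intro divide_right_mono mult_left_mono) (auto simp: power2_eq_square algebra_simps)
  also have "\<dots> = 48 * r\<^sup>2"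
    using \<open>2 + s \<noteq> 0\<close> by simp
  finally show ?thesis .
qed

theorem lemmaA1:
  fixes M :: "'a measure" and Z :: "'a \<Rightarrow> real" and r s :: real
  assumes "prob_space M"
    and "Z \<in> borel_measurable M"
    and "integrable M Z"
    and "s > 0" and "0 \<le> r" and "r \<le> 1/4"
    and "\<forall>x\<in>space M. Z x \<ge> 0"
    and "\<forall>x\<in>space M. Z x \<ge> 2 * r * s"
    and "(\<integral>x. Z x \<partial>M) \<le> 2 * r * s + r^2 * s^2"
  shows "(\<integral>x. Fcap (Z x / (s * (2 + s))) \<partial>M) \<le> 48 * r^2"
proof -
  interpret prob_space M by fact
  define d where "d = s * (2 + s)"
  define u\<^sub>0 where "u\<^sub>0 = 2 * r / (2 + s)"
  have "0 < d" "0 \<le> u\<^sub>0"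
    using assms by (simp_all add: d_def u\<^sub>0_def)
  have "u\<^sub>0 = 2 * r * s / d"
    using assms(4) by (simp add: u\<^sub>0_def d_def)
  then have Z_lower: "u\<^sub>0 \<le> Z x / d" if "x \<in> space M" for x
    using assms(8) that \<open>0 < d\<close> by (simp add: divide_right_mono)
  have "integrable M (\<lambda>x. Fcap (Z x / d))"
    using assms(2) Fcap_le_one Fcap_nonneg by (intro integrable_const_bound[where B = 1]) auto
  then have "(\<integral>x. Fcap (Z x / d) \<partial>M) \<le> Fcap u\<^sub>0 + 14 * ((\<integral>x. Z x / d \<partial>M) - u\<^sub>0)"
    using assms(3) Z_lower Fcap_diff_le[OF \<open>0 \<le> u\<^sub>0\<close>]
    by (intro expectation_le_of_one_sided_lipschitz) (auto simp: algebra_simps)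
  also have "\<dots> \<le> 48 * u\<^sub>0\<^sup>2 + 14 * (r\<^sup>2 * s / (2 + s))"
  proof -
    have "(\<integral>x. Z x / d \<partial>M) - u\<^sub>0 \<le> (2 * r * s + r\<^sup>2 * s\<^sup>2) / d - 2 * r * s / d"
      using assms(4,9) \<open>0 < d\<close> by (simp add: u\<^sub>0_def d_def divide_right_mono)
    also have "\<dots> = r\<^sup>2 * s / (2 + s)"
      using assms(4) by (simp add: d_def divide_simps) algebra
    finally show ?thesis
      using Fcap_le_square[of u\<^sub>0] by (intro add_mono mult_left_mono) auto
  qed
  also have "\<dots> \<le> 48 * r\<^sup>2"
    using lipschitz_majorant_at_lower_bound_le assms(4) by (simp add: u\<^sub>0_def)
  finally show ?thesis
    by (simp add: d_def)
qed

end
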